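(* Let $K$ be a field with $\mathrm{char}(K) = 0$ or $\mathrm{char}(K) > n$, let $1 \le d \le n$ and $N \ge n+d$. Then in $K[x_1,\dots,x_N]$, $$(S_N.\,e_n^d(x_1,\dots,x_n)) = (S_N.\,x_1\cdots x_d).$$
   Context: $e_n^d(x_1,\dots,x_n)$ denotes the elementary symmetric polynomial of degree $d$ in $x_1,\dots,x_n$. $S_N$ acts on $K[x_1,\dots,x_N]$ by permuting variables; $(S_N.g)$ denotes the ideal generated by the $S_N$-orbit of $g$. *)

theory Defs
  imports "HOL-Library.Poly_Mapping" "HOL-Combinatorics.Permutations"
begin

text \<open>Multivariate polynomials over 'a in variables x_0, x_1, ... (indexed by nat):
  a polynomial maps each monomial (exponent vector, nat  to its coefficient.
  Multiplication is the convolution product from Poly_Mapping.\<close>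
type_synonym 'a mpoly = "(nat \<Rightarrow>\<^sub>0 nat) \<Rightarrow>\<^sub>0 'a"

definition Var :: "nat \<Rightarrow> 'a::comm_ring_1 mpoly" where
  "Var i = Poly_Mapping.single (Poly_Mapping.single i 1) 1"

definition polys_in :: "nat \<Rightarrow> 'a::comm_ring_1 mpoly set" where
  "polys_in N = {p. \<forall>m \<in> Poly_Mapping.keys p. Poly_Mapping.keys m \<subseteq> {..<N}}"

definition ideal_gen :: "nat \<Rightarrow> 'a::comm_ring_1 mpoly set \<Rightarrow> 'a mpoly set" where
  "ideal_gen N G = {p. \<exists>F c. finite F \<and> F \<subseteq> G \<and> (\<forall>g\<in>F. c g \<in> polys_in N)
                          \<and> p = (\<Sum>g\<in>F. c g * g)}"

definition rename_mono :: "(nat \<Rightarrow> nat) \<Rightarrow> (nat \<Rightarrow>\<^sub>0 nat) \<Rightarrow> (nat \<Rightarrow>\<^sub>0 nat)" where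
  "rename_mono \<sigma> m = (\<Sum>i\<in>Poly_Mapping.keys m. Poly_Mapping.single (\<sigma> i) (Poly_Mapping.lookup m i))"

definition perm_act :: "(nat \<Rightarrow> nat) \<Rightarrow> 'a::comm_ring_1 mpoly \<Rightarrow> 'a mpoly" where
  "perm_act \<sigma> p = (\<Sum>m\<in>Poly_Mapping.keys p. Poly_Mapping.single (rename_mono \<sigma> m) (Poly_Mapping.lookup p m))"

definition orbit_SN :: "nat \<Rightarrow> 'a::comm_ring_1 mpoly \<Rightarrow> 'a mpoly set" where
  "orbit_SN N g = {perm_act \<sigma> g | \<sigma>. \<sigma> permutes {..<N}}"

definition elem_sym :: "nat \<Rightarrow> nat \<Rightarrow> 'a::comm_ring_1 mpoly" where
  "elem_sym n d = (\<Sum>S\<in>{S. S \<subseteq> {..<n} \<and> card S = d}. \<Prod>i\<in>S. Var i)"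

end

theory Submission
  imports Defs
begin

text \<open>Both orbits are explicit: that of e_d(x_1,...,x_n) consists of the e_d(x_B) with |B| = n,
  that of x_1...x_d of the squarefree monomials x_S with |S| = d. As e_d(x_B) is a sum of such
  monomials, one inclusion is immediate. For the other, let I be generated by the e_d(x_B), put
  m = n - d and show by induction on k: if |U| \<ge> m + 2k and P e_k(x_B) \<in> I for all B \<subseteq> U with
  |B| = m + k, then P x_R \<in> I for all R \<subseteq> U with |R| = k. The identity
  e_(k+1)(x_(B+a)) - e_(k+1)(x_(B+b)) = (x_a - x_b) e_k(x_B) makes the induction hypothesis applicable
  to P (x_a - x_b) on U - {a, b}, so exchanging one variable does not change P x_R modulo I.
  Summing over the (k+1)-subsets of some B \<supseteq> R with |B| = m + k + 1 gives
  binom(m+k+1, k+1) P x_R \<in> I, and this binomial coefficient is invertible in K because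
  char K = 0 or char K > n.\<close>

lemma polys_in_add:
  assumes "p \<in> polys_in N" "q \<in> polys_in N"
  shows "p + q \<in> polys_in N"
proof -
  have "Poly_Mapping.keys (p + q) \<subseteq> Poly_Mapping.keys p \<union> Poly_Mapping.keys q"
    by (rule keys_add)
  then show ?thesis
    using assms unfolding polys_in_def by blast
qed

lemma polys_in_mult:
  fixes p q :: "'a::comm_ring_1 mpoly"
  assumes "p \<in> polys_in N" "q \<in> polys_in N"
  shows "p * q \<in> polys_in N"
  unfolding polys_in_def
proof (intro CollectI ballI)
  fix m assume "m \<in> Poly_Mapping.keys (p * q)"
  then obtain a b where "m = a + b" "a \<in> Poly_Mapping.keys p" "b \<in> Poly_Mapping.keys q"
    using keys_mult by blast
  moreover have "Poly_Mapping.keys (a + b) \<subseteq> Poly_Mapping.keys a \<union> Poly_Mapping.keys b"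
    by (rule keys_add)
  ultimately show "Poly_Mapping.keys m \<subseteq> {..<N}"
    using assms unfolding polys_in_def by blast
qed

lemma polys_in_uminus: "p \<in> polys_in N \<Longrightarrow> - p \<in> polys_in N"
  unfolding polys_in_def by simp

lemma polys_in_diff: "p \<in> polys_in N \<Longrightarrow> q \<in> polys_in N \<Longrightarrow> p - q \<in> polys_in N"
  unfolding diff_conv_add_uminus by (intro polys_in_add polys_in_uminus)

lemma polys_in_const: "Poly_Mapping.single 0 c \<in> polys_in N"
  unfolding polys_in_def by simp

lemma polys_in_zero: "0 \<in> polys_in N"
  unfolding polys_in_def by simp

lemma polys_in_one: "1 \<in> polys_in N"
  using polys_in_const[of 1] by simp

lemma polys_in_Var: "i < N \<Longrightarrow> Var i \<in> polys_in N"
  unfolding polys_in_def Var_def by simp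

lemma ideal_genI:
  assumes "finite F" "F \<subseteq> G" "\<And>g. g \<in> F \<Longrightarrow> c g \<in> polys_in N" "p = (\<Sum>g\<in>F. c g * g)"
  shows "p \<in> ideal_gen N G"
  unfolding ideal_gen_def using assms by (intro CollectI exI[of _ F] exI[of _ c]) blast

lemma ideal_genE:
  assumes "p \<in> ideal_gen N G"
  obtains F c where "finite F" "F \<subseteq> G" "\<And>g. g \<in> F \<Longrightarrow> c g \<in> polys_in N" "p = (\<Sum>g\<in>F. c g * g)"
  using assms unfolding ideal_gen_def by blast

lemma ideal_gen_zero: "0 \<in> ideal_gen N G"
  by (rule ideal_genI[where F = "{}"]) simp_all

lemma ideal_gen_base: "g \<in> G \<Longrightarrow> g \<in> ideal_gen N G"
  by (rule ideal_genI[where F = "{g}" and c = "\<lambda>_. 1"]) (simp_all add: polys_in_one)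

lemma ideal_gen_add:
  assumes "p \<in> ideal_gen N G" "q \<in> ideal_gen N G"
  shows "p + q \<in> ideal_gen N G"
proof -
  obtain F1 c1 where F1: "finite F1" "F1 \<subseteq> G" "\<And>g. g \<in> F1 \<Longrightarrow> c1 g \<in> polys_in N"
    and p: "p = (\<Sum>g\<in>F1. c1 g * g)"
    by (rule ideal_genE[OF assms(1)]) blast
  obtain F2 c2 where F2: "finite F2" "F2 \<subseteq> G" "\<And>g. g \<in> F2 \<Longrightarrow> c2 g \<in> polys_in N"
    and q: "q = (\<Sum>g\<in>F2. c2 g * g)"
    by (rule ideal_genE[OF assms(2)]) blast
  define c where "c g = (if g \<in> F1 then c1 g else 0) + (if g \<in> F2 then c2 g else 0)" for g
  have "c g * g = (if g \<in> F1 then c1 g * g else 0) + (if g \<in> F2 then c2 g * g else 0)" for g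
    by (simp add: c_def distrib_right)
  then have "(\<Sum>g\<in>F1 \<union> F2. c g * g) = (\<Sum>g\<in>F1 \<union> F2. if g \<in> F1 then c1 g * g else 0)
      + (\<Sum>g\<in>F1 \<union> F2. if g \<in> F2 then c2 g * g else 0)"
    by (simp add: sum.distrib)
  also have "\<dots> = p + q"
    using F1(1) F2(1) unfolding p q by (simp add: sum.inter_restrict[symmetric] Int_absorb1)
  finally have sum_eq: "p + q = (\<Sum>g\<in>F1 \<union> F2. c g * g)" ..
  have "c g \<in> polys_in N" for g
  proof -
    have "(if g \<in> F1 then c1 g else 0) \<in> polys_in N"
      using F1(3) by (simp add: polys_in_zero)
    moreover have "(if g \<in> F2 then c2 g else 0) \<in> polys_in N"
      using F2(3) by (simp add: polys_in_zero)
    ultimately show ?thesis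
      unfolding c_def by (rule polys_in_add)
  qed
  then show ?thesis
    using F1(1,2) F2(1,2) sum_eq by (intro ideal_genI[of "F1 \<union> F2"]) simp_all
qed

lemma ideal_gen_mult:
  assumes "q \<in> polys_in N" "p \<in> ideal_gen N G"
  shows "q * p \<in> ideal_gen N G"
proof -
  obtain F c where F: "finite F" "F \<subseteq> G" "\<And>g. g \<in> F \<Longrightarrow> c g \<in> polys_in N"
    and p: "p = (\<Sum>g\<in>F. c g * g)"
    by (rule ideal_genE[OF assms(2)]) blast
  have "q * p = (\<Sum>g\<in>F. (q * c g) * g)"
    unfolding p by (simp add: sum_distrib_left mult.assoc)
  moreover have "q * c g \<in> polys_in N" if "g \<in> F" for g
    by (rule polys_in_mult[OF assms(1) F(3)[OF that]])
  ultimately show ?thesis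
    by (intro ideal_genI[OF F(1,2)])
qed

lemma ideal_gen_diff:
  assumes "p \<in> ideal_gen N G" "q \<in> ideal_gen N G"
  shows "p - q \<in> ideal_gen N G"
proof -
  have "- 1 * q \<in> ideal_gen N G"
    by (rule ideal_gen_mult[OF polys_in_uminus[OF polys_in_one] assms(2)])
  then have "- q \<in> ideal_gen N G"
    by simp
  then have "p + - q \<in> ideal_gen N G"
    by (rule ideal_gen_add[OF assms(1)])
  then show ?thesis
    by simp
qed

lemma ideal_gen_sum:
  "(\<And>x. x \<in> A \<Longrightarrow> f x \<in> ideal_gen N G) \<Longrightarrow> sum f A \<in> ideal_gen N G"
  by (induction A rule: infinite_finite_induct) (auto simp: ideal_gen_zero ideal_gen_add)

lemma ideal_gen_least: "G \<subseteq> ideal_gen N H \<Longrightarrow> ideal_gen N G \<subseteq> ideal_gen N H"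
  by (auto elim!: ideal_genE intro!: ideal_gen_sum ideal_gen_mult)

lemma ideal_gen_cancel_of_nat:
  fixes p :: "'a::field mpoly"
  assumes "of_nat c * p \<in> ideal_gen N G" "(of_nat c :: 'a) \<noteq> 0"
  shows "p \<in> ideal_gen N G"
proof -
  let ?u = "Poly_Mapping.single 0 (inverse (of_nat c :: 'a))"
  have "?u * of_nat c = 1"
    using assms(2) by (simp flip: single_of_nat add: mult_single)
  then have "?u * (of_nat c * p) = p"
    by (metis mult.assoc mult_1)
  moreover have "?u * (of_nat c * p) \<in> ideal_gen N G"
    by (rule ideal_gen_mult[OF polys_in_const assms(1)])
  ultimately show ?thesis
    by (simp only:)
qed

definition sqfree_exp :: "nat set \<Rightarrow> (nat \<Rightarrow>\<^sub>0 nat)" where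
  "sqfree_exp S = (\<Sum>i\<in>S. Poly_Mapping.single i 1)"

definition sqfree_monom :: "nat set \<Rightarrow> 'a::comm_ring_1 mpoly" where
  "sqfree_monom S = Poly_Mapping.single (sqfree_exp S) 1"

definition esym :: "nat set \<Rightarrow> nat \<Rightarrow> 'a::comm_ring_1 mpoly" where
  "esym B k = (\<Sum>S\<in>{S. S \<subseteq> B \<and> card S = k}. sqfree_monom S)"

lemma lookup_sqfree_exp: "finite S \<Longrightarrow> Poly_Mapping.lookup (sqfree_exp S) j = (if j \<in> S then 1 else 0)"
  unfolding sqfree_exp_def lookup_sum lookup_single when_def by (simp add: sum.delta)

lemma keys_sqfree_exp: "finite S \<Longrightarrow> Poly_Mapping.keys (sqfree_exp S) = S"
  by (rule set_eqI) (simp add: in_keys_iff lookup_sqfree_exp)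

lemma sqfree_monom_empty: "sqfree_monom {} = 1"
  unfolding sqfree_monom_def sqfree_exp_def by simp

lemma sqfree_monom_insert:
  "finite S \<Longrightarrow> i \<notin> S \<Longrightarrow> sqfree_monom (insert i S) = Var i * sqfree_monom S"
  unfolding sqfree_monom_def Var_def sqfree_exp_def by (simp add: mult_single)

lemma prod_Var_eq_sqfree_monom: "finite S \<Longrightarrow> (\<Prod>i\<in>S. Var i) = sqfree_monom S"
  by (induction S rule: finite_induct) (simp_all add: sqfree_monom_empty sqfree_monom_insert)

lemma rename_mono_sqfree_exp:
  assumes "finite S" "inj_on \<sigma> S"
  shows "rename_mono \<sigma> (sqfree_exp S) = sqfree_exp (\<sigma> ` S)"
proof -
  have "rename_mono \<sigma> (sqfree_exp S) = (\<Sum>i\<in>S. Poly_Mapping.single (\<sigma> i) 1)"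
    unfolding rename_mono_def keys_sqfree_exp[OF assms(1)]
    by (rule sum.cong) (simp_all add: lookup_sqfree_exp assms(1))
  also have "\<dots> = sqfree_exp (\<sigma> ` S)"
    unfolding sqfree_exp_def by (simp add: sum.reindex[OF assms(2)] o_def)
  finally show ?thesis .
qed

lemma perm_act_eq_sum_superset:
  assumes "finite K" "Poly_Mapping.keys p \<subseteq> K"
  shows "perm_act \<sigma> p = (\<Sum>m\<in>K. Poly_Mapping.single (rename_mono \<sigma> m) (Poly_Mapping.lookup p m))"
  unfolding perm_act_def
  by (rule sum.mono_neutral_left) (use assms in \<open>auto simp: in_keys_iff\<close>)

lemma perm_act_add: "perm_act \<sigma> (p + q) = perm_act \<sigma> p + perm_act \<sigma> q"
proof -
  let ?K = "Poly_Mapping.keys p \<union> Poly_Mapping.keys q"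
  let ?t = "\<lambda>r m. Poly_Mapping.single (rename_mono \<sigma> m) (Poly_Mapping.lookup r m)"
  have "perm_act \<sigma> (p + q) = (\<Sum>m\<in>?K. ?t (p + q) m)"
    by (rule perm_act_eq_sum_superset[OF _ keys_add]) simp
  also have "\<dots> = (\<Sum>m\<in>?K. ?t p m + ?t q m)"
    by (simp only: lookup_add single_add)
  also have "\<dots> = (\<Sum>m\<in>?K. ?t p m) + (\<Sum>m\<in>?K. ?t q m)"
    by (rule sum.distrib)
  also have "\<dots> = perm_act \<sigma> p + perm_act \<sigma> q"
    by (simp only: perm_act_eq_sum_superset[of ?K] finite_Un finite_keys Un_upper1 Un_upper2)
  finally show ?thesis .
qed

lemma perm_act_zero: "perm_act \<sigma> 0 = 0"
  unfolding perm_act_def by simp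

lemma perm_act_sum: "perm_act \<sigma> (sum f A) = (\<Sum>x\<in>A. perm_act \<sigma> (f x))"
  by (induction A rule: infinite_finite_induct) (simp_all add: perm_act_zero perm_act_add)

lemma perm_act_sqfree_monom:
  "finite S \<Longrightarrow> inj_on \<sigma> S \<Longrightarrow> perm_act \<sigma> (sqfree_monom S) = sqfree_monom (\<sigma> ` S)"
  unfolding perm_act_def sqfree_monom_def by (simp add: rename_mono_sqfree_exp)

lemma elem_sym_eq_esym: "elem_sym n d = esym {..<n} d"
  unfolding elem_sym_def esym_def
  by (rule sum.cong) (auto intro: prod_Var_eq_sqfree_monom finite_subset)

lemma esym_card: "finite S \<Longrightarrow> esym S (card S) = sqfree_monom S"
proof -
  assume "finite S"
  then have "{T. T \<subseteq> S \<and> card T = card S} = {S}"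
    using card_subset_eq by blast
  then show ?thesis
    unfolding esym_def by simp
qed

lemma esym_0:
  assumes "finite B"
  shows "esym B 0 = 1"
proof -
  have "{S. S \<subseteq> B \<and> card S = 0} = {{}}"
    using assms by (auto simp: card_eq_0_iff dest: finite_subset)
  then show ?thesis
    by (simp add: esym_def sqfree_monom_empty)
qed

lemma esym_insert:
  assumes "finite B" "a \<notin> B"
  shows "esym (insert a B) (Suc k) = esym B (Suc k) + Var a * esym B k"
proof -
  let ?Sub = "\<lambda>j. {S. S \<subseteq> B \<and> card S = j}"
  have split: "{S. S \<subseteq> insert a B \<and> card S = Suc k} = ?Sub (Suc k) \<union> insert a ` ?Sub k"
  proof (intro equalityI subsetI)
    fix S assume S: "S \<in> {S. S \<subseteq> insert a B \<and> card S = Suc k}"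
    show "S \<in> ?Sub (Suc k) \<union> insert a ` ?Sub k"
    proof (cases "a \<in> S")
      case True
      then have "S = insert a (S - {a})" by auto
      moreover have "S - {a} \<in> ?Sub k"
        using S True assms(1) finite_subset[of S "insert a B"] by auto
      ultimately show ?thesis by blast
    qed (use S in auto)
  qed (use assms finite_subset[of _ B] in \<open>auto simp: card_insert_if\<close>)
  have inj: "inj_on (insert a) (?Sub k)"
    using assms(2) by (intro inj_onI) (metis insert_ident mem_Collect_eq subsetD)
  have "esym (insert a B) (Suc k) = esym B (Suc k) + (\<Sum>S\<in>insert a ` ?Sub k. sqfree_monom S)"
    unfolding esym_def split using assms by (intro sum.union_disjoint) auto
  also have "(\<Sum>S\<in>insert a ` ?Sub k. sqfree_monom S) = Var a * esym B k"
    unfolding esym_def sum.reindex[OF inj] sum_distrib_left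
    by (rule sum.cong) (use assms finite_subset in \<open>auto intro!: sqfree_monom_insert\<close>)
  finally show ?thesis .
qed

lemma perm_act_esym:
  assumes "finite A" "inj \<sigma>"
  shows "perm_act \<sigma> (esym A k) = esym (\<sigma> ` A) k"
proof -
  let ?Sub = "\<lambda>A. {S. S \<subseteq> A \<and> card S = k}"
  have inj_on_subsets: "inj_on ((`) \<sigma>) (?Sub A)"
    using assms(2) by (intro inj_onI) (simp add: inj_image_eq_iff)
  have image_subsets: "?Sub (\<sigma> ` A) = (`) \<sigma> ` ?Sub A"
  proof (intro equalityI subsetI)
    fix T assume T: "T \<in> ?Sub (\<sigma> ` A)"
    then obtain S where "S \<subseteq> A" "T = \<sigma> ` S"
      by (auto simp: subset_image_iff)
    with T assms(2) show "T \<in> (`) \<sigma> ` ?Sub A"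
      by (auto simp: card_image inj_on_subset)
  next
    fix T assume "T \<in> (`) \<sigma> ` ?Sub A"
    then show "T \<in> ?Sub (\<sigma> ` A)"
      using assms(2) by (auto simp: card_image inj_on_subset)
  qed
  have "perm_act \<sigma> (esym A k) = (\<Sum>S\<in>?Sub A. sqfree_monom (\<sigma> ` S))"
    unfolding esym_def perm_act_sum
    using assms by (intro sum.cong) (auto intro: perm_act_sqfree_monom finite_subset inj_on_subset)
  also have "\<dots> = esym (\<sigma> ` A) k"
    unfolding esym_def by (rule sum.reindex_cong[OF inj_on_subsets image_subsets refl, symmetric])
  finally show ?thesis .
qed

lemma of_nat_binomial_neq_zero:
  assumes "CHAR('a::field) = 0 \<or> m < CHAR('a)" "j \<le> m"
  shows "(of_nat (m choose j) :: 'a) \<noteq> 0"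
proof -
  have "(of_nat i :: 'a) \<noteq> 0" if "i \<in> {1..m}" for i
  proof
    assume "(of_nat i :: 'a) = 0"
    then have "CHAR('a) dvd i"
      by (simp add: of_nat_eq_0_iff_char_dvd)
    then show False
      using assms(1) that by (auto dest: dvd_imp_le)
  qed
  then have "(of_nat (fact m) :: 'a) \<noteq> 0"
    by (simp add: fact_prod)
  moreover have "fact m = fact j * fact (m - j) * (m choose j)"
    using binomial_fact_lemma[OF assms(2)] by simp
  ultimately show ?thesis
    by (metis mult_zero_right of_nat_mult)
qed

lemma exists_permutes_image_eq:
  assumes "finite U" "A \<subseteq> U" "B \<subseteq> U" "card A = card B"
  obtains \<sigma> where "\<sigma> permutes U" "\<sigma> ` A = B"
proof -
  have "finite A" "finite B"
    using assms finite_subset by auto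
  then obtain f where f: "bij_betw f A B"
    using finite_same_card_bij assms(4) by blast
  have "card (U - A) = card (U - B)"
    using assms \<open>finite A\<close> \<open>finite B\<close> by (simp add: card_Diff_subset)
  then obtain g where g: "bij_betw g (U - A) (U - B)"
    using finite_same_card_bij assms(1) by blast
  define \<sigma> where "\<sigma> x = (if x \<in> A then f x else if x \<in> U then g x else x)" for x
  have \<sigma>_A: "bij_betw \<sigma> A B"
    using f unfolding \<sigma>_def by (rule bij_betw_cong[THEN iffD1, rotated]) auto
  have "bij_betw \<sigma> (U - A) (U - B)"
    using g unfolding \<sigma>_def by (rule bij_betw_cong[THEN iffD1, rotated]) auto
  then have "bij_betw \<sigma> (A \<union> (U - A)) (B \<union> (U - B))"
    by (intro bij_betw_combine[OF \<sigma>_A]) auto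
  moreover have "A \<union> (U - A) = U" "B \<union> (U - B) = U"
    using assms by auto
  ultimately have "\<sigma> permutes U"
    by (intro bij_imp_permutes) (auto simp: \<sigma>_def)
  moreover have "\<sigma> ` A = B"
    using \<sigma>_A by (simp add: bij_betw_def)
  ultimately show ?thesis
    by (rule that)
qed

lemma orbit_SN_esym:
  assumes "A \<subseteq> {..<N}"
  shows "orbit_SN N (esym A k) = (\<lambda>B. esym B k) ` {B. B \<subseteq> {..<N} \<and> card B = card A}"
proof (intro equalityI subsetI)
  have "finite A"
    using assms finite_subset by blast
  fix p
  assume "p \<in> orbit_SN N (esym A k)"
  then obtain \<sigma> where \<sigma>: "\<sigma> permutes {..<N}" "p = perm_act \<sigma> (esym A k)"
    unfolding orbit_SN_def by blast
  then have "p = esym (\<sigma> ` A) k"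
    using \<open>finite A\<close> by (simp add: perm_act_esym permutes_inj)
  moreover have "\<sigma> ` A \<subseteq> {..<N}"
    using assms permutes_image[OF \<sigma>(1)] by blast
  moreover have "card (\<sigma> ` A) = card A"
    using permutes_inj[OF \<sigma>(1)] by (simp add: card_image inj_on_subset)
  ultimately show "p \<in> (\<lambda>B. esym B k) ` {B. B \<subseteq> {..<N} \<and> card B = card A}"
    by blast
next
  have "finite A"
    using assms finite_subset by blast
  fix p
  assume "p \<in> (\<lambda>B. esym B k) ` {B. B \<subseteq> {..<N} \<and> card B = card A}"
  then obtain B where B: "B \<subseteq> {..<N}" "card B = card A" "p = esym B k"
    by blast
  obtain \<sigma> where \<sigma>: "\<sigma> permutes {..<N}" "\<sigma> ` A = B"
    using exists_permutes_image_eq[of "{..<N}" A B] assms B(1,2) by auto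
  then have "p = perm_act \<sigma> (esym A k)"
    using B(3) \<open>finite A\<close> by (simp add: perm_act_esym permutes_inj)
  then show "p \<in> orbit_SN N (esym A k)"
    unfolding orbit_SN_def using \<sigma>(1) by blast
qed

lemma ideal_gen_diff_of_exchange:
  fixes f :: "nat set \<Rightarrow> 'a::comm_ring_1 mpoly"
  assumes "finite U" "R \<subseteq> U" "card R = Suc k"
    and exchange: "\<And>a b R'. a \<in> U \<Longrightarrow> b \<in> U \<Longrightarrow> a \<noteq> b \<Longrightarrow> R' \<subseteq> U - {a, b} \<Longrightarrow> card R' = k
         \<Longrightarrow> f (insert a R') - f (insert b R') \<in> ideal_gen N G"
  shows "S \<subseteq> U \<Longrightarrow> card S = Suc k \<Longrightarrow> f S - f R \<in> ideal_gen N G"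
proof (induction "card (S - R)" arbitrary: S rule: less_induct)
  case less
  have "finite S" "finite R"
    using less.prems(1) assms(1,2) finite_subset by auto
  show ?case
  proof (cases "S \<subseteq> R")
    case True
    then have "S = R"
      using card_subset_eq[OF \<open>finite R\<close>] less.prems(2) assms(3) by simp
    then show ?thesis
      by (simp add: ideal_gen_zero)
  next
    case False
    then obtain s where s: "s \<in> S" "s \<notin> R"
      by blast
    have "\<not> R \<subseteq> S"
    proof
      assume "R \<subseteq> S"
      then have "R = S"
        using card_subset_eq[OF \<open>finite S\<close>] less.prems(2) assms(3) by simp
      then show False
        using s by blast
    qed
    then obtain r where r: "r \<in> R" "r \<notin> S"
      by blast
    define R' where "R' = S - {s}"
    have S_eq: "S = insert s R'"
      unfolding R'_def using s(1) by blast
    have R': "R' \<subseteq> U - {s, r}" "card R' = k" "r \<notin> R'"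
      unfolding R'_def using less.prems r(2) s(1) \<open>finite S\<close> by auto
    have "s \<in> U" "r \<in> U" "s \<noteq> r"
      using s r less.prems(1) assms(2) by blast+
    then have "f S - f (insert r R') \<in> ideal_gen N G"
      unfolding S_eq by (rule exchange[OF _ _ _ R'(1,2)])
    moreover have "f (insert r R') - f R \<in> ideal_gen N G"
    proof (rule less.hyps)
      have "insert r R' - R = (S - R) - {s}"
        unfolding R'_def using r s by blast
      also have "card \<dots> < card (S - R)"
        by (rule card_Diff1_less) (use s \<open>finite S\<close> in simp_all)
      finally show "card (insert r R' - R) < card (S - R)" .
      show "insert r R' \<subseteq> U"
        using R'(1) \<open>r \<in> U\<close> by blast
      show "card (insert r R') = Suc k"
        using R'(2,3) \<open>finite S\<close> unfolding R'_def by simp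
    qed
    ultimately have "(f S - f (insert r R')) + (f (insert r R') - f R) \<in> ideal_gen N G"
      by (rule ideal_gen_add)
    then show ?thesis
      by simp
  qed
qed

lemma esym_exchange_in_ideal_gen:
  assumes esym_mult: "\<And>B'. B' \<subseteq> U \<Longrightarrow> card B' = Suc (card B) \<Longrightarrow> P * esym B' (Suc k) \<in> ideal_gen N G"
    and "finite U" "a \<in> U" "b \<in> U" "B \<subseteq> U - {a, b}"
  shows "P * (Var a - Var b) * esym B k \<in> ideal_gen N G"
proof -
  have "finite B" "a \<notin> B" "b \<notin> B"
    using assms(2,5) finite_subset by auto
  then have "P * (Var a - Var b) * esym B k
      = P * esym (insert a B) (Suc k) - P * esym (insert b B) (Suc k)"
    by (simp add: esym_insert algebra_simps)
  moreover have "P * esym (insert a B) (Suc k) \<in> ideal_gen N G"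
    "P * esym (insert b B) (Suc k) \<in> ideal_gen N G"
    using assms \<open>finite B\<close> \<open>a \<notin> B\<close> \<open>b \<notin> B\<close> by (auto intro!: esym_mult)
  ultimately show ?thesis
    by (simp add: ideal_gen_diff)
qed

lemma of_nat_card_mult_in_ideal_gen:
  assumes "finite F" "(\<Sum>S\<in>F. f S) \<in> ideal_gen N G" "\<And>S. S \<in> F \<Longrightarrow> f S - x \<in> ideal_gen N G"
  shows "of_nat (card F) * x \<in> ideal_gen N G"
proof -
  have "of_nat (card F) * x = (\<Sum>S\<in>F. f S) - (\<Sum>S\<in>F. f S - x)"
    by (simp add: sum_subtractf)
  then show ?thesis
    using assms by (simp add: ideal_gen_diff ideal_gen_sum)
qed

lemma sqfree_monom_mult_in_ideal_gen_of_exchange: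
  fixes P :: "'a::field mpoly"
  assumes "CHAR('a) = 0 \<or> m + Suc k < CHAR('a)" "m + Suc k \<le> card U"
    and "\<And>B. B \<subseteq> U \<Longrightarrow> card B = m + Suc k \<Longrightarrow> P * esym B (Suc k) \<in> ideal_gen N G"
    and "R \<subseteq> U" "card R = Suc k" "finite U"
    and exchange: "\<And>a b R'. a \<in> U \<Longrightarrow> b \<in> U \<Longrightarrow> a \<noteq> b \<Longrightarrow> R' \<subseteq> U - {a, b} \<Longrightarrow> card R' = k
         \<Longrightarrow> P * sqfree_monom (insert a R') - P * sqfree_monom (insert b R') \<in> ideal_gen N G"
  shows "P * sqfree_monom R \<in> ideal_gen N G"
proof -
  have "card R \<le> m + Suc k"
    using assms(5) by simp
  then obtain B where B: "R \<subseteq> B" "B \<subseteq> U" "card B = m + Suc k"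
    using exists_subset_between[OF _ assms(2,4,6)] by blast
  have "finite B"
    using finite_subset[OF B(2) assms(6)] .
  let ?F = "{S. S \<subseteq> B \<and> card S = Suc k}"
  have "of_nat (card ?F) * (P * sqfree_monom R) \<in> ideal_gen N G"
  proof (rule of_nat_card_mult_in_ideal_gen)
    show "finite ?F"
      using \<open>finite B\<close> by simp
    show "(\<Sum>S\<in>?F. P * sqfree_monom S) \<in> ideal_gen N G"
      using assms(3)[OF B(2,3)] by (simp add: esym_def sum_distrib_left)
    fix S
    assume "S \<in> ?F"
    then have "S \<subseteq> U" "card S = Suc k"
      using B(2) by blast+
    with assms(6,4,5) exchange
    show "P * sqfree_monom S - P * sqfree_monom R \<in> ideal_gen N G"
      by (rule ideal_gen_diff_of_exchange[where f = "\<lambda>S. P * sqfree_monom S"])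
  qed
  moreover have "(of_nat (card ?F) :: 'a) \<noteq> 0"
    unfolding n_subsets[OF \<open>finite B\<close>] B(3)
    by (rule of_nat_binomial_neq_zero[OF assms(1)]) simp
  ultimately show ?thesis
    by (rule ideal_gen_cancel_of_nat)
qed

lemma sqfree_monom_mult_in_ideal_gen:
  fixes P :: "'a::field mpoly"
  assumes "CHAR('a) = 0 \<or> m + k < CHAR('a)" "U \<subseteq> {..<N}" "m + 2 * k \<le> card U"
    and "P \<in> polys_in N"
    and "\<And>B. B \<subseteq> U \<Longrightarrow> card B = m + k \<Longrightarrow> P * esym B k \<in> ideal_gen N G"
    and "R \<subseteq> U" "card R = k"
  shows "P * sqfree_monom R \<in> ideal_gen N G"
  using assms
proof (induction k arbitrary: P U R)
  case 0
  have "m \<le> card U"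
    using "0.prems"(3) by simp
  then obtain B where B: "B \<subseteq> U" "card B = m" "finite B"
    by (rule obtain_subset_with_card_n)
  have "finite R"
    using finite_subset[OF "0.prems"(6) finite_subset[OF "0.prems"(2)]] by simp
  then have "R = {}"
    using "0.prems"(7) by simp
  moreover have "P * esym B 0 \<in> ideal_gen N G"
    using "0.prems"(5) B(1,2) by simp
  ultimately show ?case
    using B(3) by (simp add: esym_0 sqfree_monom_empty)
next
  case (Suc k)
  have "finite U"
    using finite_subset[OF Suc.prems(2)] by simp
  have esym_mult: "P * esym B (Suc k) \<in> ideal_gen N G" if "B \<subseteq> U" "card B = Suc (m + k)" for B
    using Suc.prems(5) that by simp
  have exchange: "P * sqfree_monom (insert a R') - P * sqfree_monom (insert b R') \<in> ideal_gen N G"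
    if ab: "a \<in> U" "b \<in> U" "a \<noteq> b" and R': "R' \<subseteq> U - {a, b}" "card R' = k" for a b R'
  proof -
    have IH: "P * (Var a - Var b) * sqfree_monom R' \<in> ideal_gen N G"
    proof (rule Suc.IH)
      show "CHAR('a) = 0 \<or> m + k < CHAR('a)"
        using Suc.prems(1) by auto
      show "U - {a, b} \<subseteq> {..<N}"
        using Suc.prems(2) by blast
      have "card (U - {a, b}) = card U - 2"
        using ab \<open>finite U\<close> by (simp add: card_Diff_subset)
      then show "m + 2 * k \<le> card (U - {a, b})"
        using Suc.prems(3) by simp
      show "P * (Var a - Var b) \<in> polys_in N"
        using Suc.prems(2) ab(1,2) by (intro polys_in_mult[OF Suc.prems(4)] polys_in_diff polys_in_Var) blast+
      show "P * (Var a - Var b) * esym B k \<in> ideal_gen N G"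
        if "B \<subseteq> U - {a, b}" "card B = m + k" for B
        by (rule esym_exchange_in_ideal_gen[OF _ \<open>finite U\<close> ab(1,2) that(1)])
          (simp add: esym_mult that(2))
    qed (fact R')+
    have "finite R'"
      using finite_subset[OF R'(1)] \<open>finite U\<close> by simp
    moreover have "a \<notin> R'" "b \<notin> R'"
      using R'(1) by blast+
    ultimately have "P * (Var a - Var b) * sqfree_monom R'
        = P * sqfree_monom (insert a R') - P * sqfree_monom (insert b R')"
      by (simp add: sqfree_monom_insert algebra_simps)
    with IH show ?thesis
      by simp
  qed
  have "m + Suc k \<le> card U"
    using Suc.prems(3) by simp
  with Suc.prems(1) show ?case
    using Suc.prems(5-7) \<open>finite U\<close> exchange by (rule sqfree_monom_mult_in_ideal_gen_of_exchange)
qed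

lemma esym_in_ideal_gen_sqfree_esyms:
  assumes "B \<subseteq> {..<N}"
  shows "esym B k \<in> ideal_gen N ((\<lambda>S. esym S k) ` {S. S \<subseteq> {..<N} \<and> card S = k})"
proof -
  have "esym B k = (\<Sum>S\<in>{S. S \<subseteq> B \<and> card S = k}. esym S k)"
    unfolding esym_def[of B] using assms
    by (intro sum.cong) (auto simp: esym_card[symmetric] finite_subset)
  also have "\<dots> \<in> ideal_gen N ((\<lambda>S. esym S k) ` {S. S \<subseteq> {..<N} \<and> card S = k})"
    using assms by (intro ideal_gen_sum ideal_gen_base) auto
  finally show ?thesis .
qed

lemma sqfree_esym_in_ideal_gen_esyms:
  assumes "CHAR('a::field) = 0 \<or> n < CHAR('a)" "d \<le> n" "n + d \<le> N"
    and "S \<subseteq> {..<N}" "card S = d"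
  shows "(esym S d :: 'a mpoly) \<in> ideal_gen N ((\<lambda>B. esym B d) ` {B. B \<subseteq> {..<N} \<and> card B = n})"
proof -
  have "1 * sqfree_monom S \<in> ideal_gen N ((\<lambda>B. esym B d :: 'a mpoly) ` {B. B \<subseteq> {..<N} \<and> card B = n})"
    using assms
    by (intro sqfree_monom_mult_in_ideal_gen[where m = "n - d" and k = d and U = "{..<N}"])
      (auto intro: polys_in_one ideal_gen_base)
  moreover have "esym S d = (sqfree_monom S :: 'a mpoly)"
    using esym_card[of S] finite_subset[OF assms(4)] assms(5) by simp
  ultimately show ?thesis
    by simp
qed

theorem proposition2p1:
  fixes n d N :: nat
  assumes "CHAR('a::field) = 0 \<or> CHAR('a) > n"
    and "1 \<le> d" and "d \<le> n" and "N \<ge> n + d"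
  shows "ideal_gen N (orbit_SN N (elem_sym n d :: 'a mpoly))
         = ideal_gen N (orbit_SN N (\<Prod>i<d. Var i :: 'a mpoly))"
proof -
  let ?esyms = "\<lambda>j. (\<lambda>B. esym B d :: 'a mpoly) ` {B. B \<subseteq> {..<N} \<and> card B = j}"
  have "orbit_SN N (elem_sym n d :: 'a mpoly) = ?esyms n"
    using orbit_SN_esym[of "{..<n}" N d] assms(4) by (simp add: elem_sym_eq_esym)
  moreover have "(\<Prod>i<d. Var i :: 'a mpoly) = esym {..<d} d"
    by (metis card_lessThan esym_card finite_lessThan prod_Var_eq_sqfree_monom)
  then have "orbit_SN N (\<Prod>i<d. Var i :: 'a mpoly) = ?esyms d"
    using orbit_SN_esym[of "{..<d}" N d] assms(3,4) by simp
  moreover have "?esyms n \<subseteq> ideal_gen N (?esyms d)"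
    by (auto intro: esym_in_ideal_gen_sqfree_esyms)
  moreover have "?esyms d \<subseteq> ideal_gen N (?esyms n)"
    using assms(1,3,4) by (auto intro: sqfree_esym_in_ideal_gen_esyms)
  ultimately show ?thesis
    by (simp add: ideal_gen_least subset_antisym)
qed

end
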